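(* Let $\mathcal{A}$ be a Hopf algebra over $\mathbb{C}$ whose antipode $S$ satisfies $S^2=\mathrm{id}$, let $\Pi_\phi$ be a representation of $\mathcal{A}$ on $V$ and $|\phi_r\rangle\in V$. Define $\mathcal{T}_r=\{a\in\mathcal{A}:(\mathrm{id}\otimes\Pi_\phi)\Delta(a)(1\otimes|\phi_r\rangle)=a\otimes|\phi_r\rangle\}$ and $\mathcal{T}_l=\{a\in\mathcal{A}:(\Pi_\phi\otimes\mathrm{id})\Delta(a)(|\phi_r\rangle\otimes1)=|\phi_r\rangle\otimes a\}$. Then $S(\mathcal{T}_l)=\mathcal{T}_r$ and $S(\mathcal{T}_r)=\mathcal{T}_l$.
   Context: With $\Delta(a)=\sum a^{(1)}\otimes a^{(2)}$, $(\mathrm{id}\otimes\Pi_\phi)\Delta(a)(1\otimes|\phi_r\rangle)=\sum a^{(1)}\otimes\Pi_\phi(a^{(2)})|\phi_r\rangle\in\mathcal{A}\otimes V$ and $(\Pi_\phi\otimes\mathrm{id})\Delta(a)(|\phi_r\rangle\otimes1)=\sum \Pi_\phi(a^{(1)})|\phi_r\rangle\otimes a^{(2)}\in V\otimes\mathcal{A}$. *)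

theory Defs
  imports "HOL-Analysis.Analysis"
begin

text \<open>Elements of an algebraic tensor product X (x) Y are represented by finite lists of pairs
(finite sums of elementary tensors).  Two such sums denote the same tensor iff they agree under
all functionals f (x) g with f, g complex-linear functionals (these separate points of the
algebraic tensor product over a field).\<close>

definition cfun_lin :: "(complex \<Rightarrow> 'x::ab_group_add \<Rightarrow> 'x) \<Rightarrow> ('x \<Rightarrow> complex) \<Rightarrow> bool" where
  "cfun_lin sX f \<longleftrightarrow> Vector_Spaces.linear sX (*) f"

definition teq2 :: "(complex \<Rightarrow> 'x::ab_group_add \<Rightarrow> 'x) \<Rightarrow> (complex \<Rightarrow> 'y::ab_group_add \<Rightarrow> 'y)
     \<Rightarrow> ('x \<times> 'y) list \<Rightarrow> ('x \<times> 'y) list \<Rightarrow> bool" where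
  "teq2 sX sY t u \<longleftrightarrow>
     (\<forall>f g. cfun_lin sX f \<and> cfun_lin sY g \<longrightarrow>
        (\<Sum>(x,y)\<leftarrow>t. f x * g y) = (\<Sum>(x,y)\<leftarrow>u. f x * g y))"

definition teq3 :: "(complex \<Rightarrow> 'x::ab_group_add \<Rightarrow> 'x) \<Rightarrow> (complex \<Rightarrow> 'y::ab_group_add \<Rightarrow> 'y) \<Rightarrow> (complex \<Rightarrow> 'z::ab_group_add \<Rightarrow> 'z)
     \<Rightarrow> ('x \<times> 'y \<times> 'z) list \<Rightarrow> ('x \<times> 'y \<times> 'z) list \<Rightarrow> bool" where
  "teq3 sX sY sZ t u \<longleftrightarrow>
     (\<forall>f g h. cfun_lin sX f \<and> cfun_lin sY g \<and> cfun_lin sZ h \<longrightarrow>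
        (\<Sum>(x,y,z)\<leftarrow>t. f x * g y * h z) = (\<Sum>(x,y,z)\<leftarrow>u. f x * g y * h z))"

definition complex_algebra :: "(complex \<Rightarrow> 'a::ring_1 \<Rightarrow> 'a) \<Rightarrow> bool" where
  "complex_algebra sA \<longleftrightarrow> vector_space sA \<and>
     (\<forall>c x y. sA c (x * y) = sA c x * y \<and> sA c (x * y) = x * sA c y)"

definition hopf_algebra :: "(complex \<Rightarrow> 'a::ring_1 \<Rightarrow> 'a) \<Rightarrow> ('a \<Rightarrow> ('a \<times> 'a) list)
     \<Rightarrow> ('a \<Rightarrow> complex) \<Rightarrow> ('a \<Rightarrow> 'a) \<Rightarrow> bool" where
  "hopf_algebra sA \<Delta> \<epsilon> S \<longleftrightarrow>
     complex_algebra sA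
     \<comment> \<open>coproduct is linear\<close>
     \<and> (\<forall>x y. teq2 sA sA (\<Delta> (x + y)) (\<Delta> x @ \<Delta> y))
     \<and> (\<forall>c x. teq2 sA sA (\<Delta> (sA c x)) (map (\<lambda>(u,v). (sA c u, v)) (\<Delta> x)))
     \<comment> \<open>coassociativity: (Delta (x) id) Delta = (id (x) Delta) Delta\<close>
     \<and> (\<forall>a. teq3 sA sA sA
           (concat (map (\<lambda>(a1,a2). map (\<lambda>(b,c). (b,c,a2)) (\<Delta> a1)) (\<Delta> a)))
           (concat (map (\<lambda>(a1,a2). map (\<lambda>(b,c). (a1,b,c)) (\<Delta> a2)) (\<Delta> a))))
     \<comment> \<open>counit: linear, and (eps (x) id) Delta = id = (id (x) eps) Delta\<close>
     \<and> Vector_Spaces.linear sA (*) \<epsilon>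
     \<and> (\<forall>a. (\<Sum>(a1,a2)\<leftarrow>\<Delta> a. sA (\<epsilon> a1) a2) = a)
     \<and> (\<forall>a. (\<Sum>(a1,a2)\<leftarrow>\<Delta> a. sA (\<epsilon> a2) a1) = a)
     \<comment> \<open>Delta and eps are unital algebra homomorphisms\<close>
     \<and> (\<forall>x y. teq2 sA sA (\<Delta> (x * y))
           (concat (map (\<lambda>(x1,x2). map (\<lambda>(y1,y2). (x1 * y1, x2 * y2)) (\<Delta> y)) (\<Delta> x))))
     \<and> teq2 sA sA (\<Delta> 1) [(1, 1)]
     \<and> (\<forall>x y. \<epsilon> (x * y) = \<epsilon> x * \<epsilon> y)
     \<and> \<epsilon> 1 = 1
     \<comment> \<open>antipode: linear, m (S (x) id) Delta = eta eps = m (id (x) S) Delta\<close>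
     \<and> Vector_Spaces.linear sA sA S
     \<and> (\<forall>a. (\<Sum>(a1,a2)\<leftarrow>\<Delta> a. S a1 * a2) = sA (\<epsilon> a) 1)
     \<and> (\<forall>a. (\<Sum>(a1,a2)\<leftarrow>\<Delta> a. a1 * S a2) = sA (\<epsilon> a) 1)"

definition representation :: "(complex \<Rightarrow> 'a::ring_1 \<Rightarrow> 'a) \<Rightarrow> (complex \<Rightarrow> 'v::ab_group_add \<Rightarrow> 'v)
     \<Rightarrow> ('a \<Rightarrow> 'v \<Rightarrow> 'v) \<Rightarrow> bool" where
  "representation sA sV \<rho> \<longleftrightarrow>
     vector_space sV
     \<and> (\<forall>a. Vector_Spaces.linear sV sV (\<rho> a))
     \<and> (\<forall>x y v. \<rho> (x + y) v = \<rho> x v + \<rho> y v)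
     \<and> (\<forall>c x v. \<rho> (sA c x) v = sV c (\<rho> x v))
     \<and> (\<forall>x y v. \<rho> (x * y) v = \<rho> x (\<rho> y v))
     \<and> (\<forall>v. \<rho> 1 v = v)"

definition T_r :: "(complex \<Rightarrow> 'a::ring_1 \<Rightarrow> 'a) \<Rightarrow> (complex \<Rightarrow> 'v::ab_group_add \<Rightarrow> 'v)
     \<Rightarrow> ('a \<Rightarrow> ('a \<times> 'a) list) \<Rightarrow> ('a \<Rightarrow> 'v \<Rightarrow> 'v) \<Rightarrow> 'v \<Rightarrow> 'a set" where
  "T_r sA sV \<Delta> \<rho> \<phi> = {a. teq2 sA sV (map (\<lambda>(a1,a2). (a1, \<rho> a2 \<phi>)) (\<Delta> a)) [(a, \<phi>)]}"

definition T_l :: "(complex \<Rightarrow> 'a::ring_1 \<Rightarrow> 'a) \<Rightarrow> (complex \<Rightarrow> 'v::ab_group_add \<Rightarrow> 'v)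
     \<Rightarrow> ('a \<Rightarrow> ('a \<times> 'a) list) \<Rightarrow> ('a \<Rightarrow> 'v \<Rightarrow> 'v) \<Rightarrow> 'v \<Rightarrow> 'a set" where
  "T_l sA sV \<Delta> \<rho> \<phi> = {a. teq2 sV sA (map (\<lambda>(a1,a2). (\<rho> a1 \<phi>, a2)) (\<Delta> a)) [(\<phi>, a)]}"

end

theory Submission
  imports Defs
begin

text \<open>The antipode is anti-comultiplicative, \<open>\<Delta>(S a) = \<Sum> S a\<^sub>2 \<otimes> S a\<^sub>1\<close>. For \<open>a \<in> T\<^sub>r\<close>, apply
\<open>x \<otimes> w \<mapsto> \<Sum> \<Pi>(S x\<^sub>2) w \<otimes> S x\<^sub>1\<close> to both sides of \<open>\<Sum> a\<^sub>1 \<otimes> \<Pi>(a\<^sub>2) \<phi> = a \<otimes> \<phi>\<close>;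
the identity \<open>\<Sum> a\<^sub>1 \<otimes> S(a\<^sub>2) a\<^sub>3 = a \<otimes> 1\<close> turns the right-hand side into
\<open>\<phi> \<otimes> S a\<close>, so \<open>S a \<in> T\<^sub>l\<close>. When \<open>S\<^sup>2 = id\<close>, \<open>S\<close> is also an antipode for the
co-opposite coproduct, and passing to it exchanges \<open>T\<^sub>l\<close> and \<open>T\<^sub>r\<close>; this gives
\<open>S(T\<^sub>l) \<subseteq> T\<^sub>r\<close>, and both equalities follow because \<open>S\<close> is an involution.

Identities between tensors are tested against products of linear functionals; expanding one
factor in finitely many coordinates extends such tests to arbitrary bilinear and trilinear forms.\<close>

definition lin_functional :: "(complex \<Rightarrow> 'x::ab_group_add \<Rightarrow> 'x) \<Rightarrow> ('x \<Rightarrow> complex) \<Rightarrow> bool" where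
  "lin_functional s f \<longleftrightarrow> (\<forall>x y. f (x + y) = f x + f y) \<and> (\<forall>c x. f (s c x) = c * f x)"

definition bilinear_form :: "(complex \<Rightarrow> 'x::ab_group_add \<Rightarrow> 'x) \<Rightarrow> ('x \<Rightarrow> 'x \<Rightarrow> complex) \<Rightarrow> bool" where
  "bilinear_form s B \<longleftrightarrow> (\<forall>y. lin_functional s (\<lambda>x. B x y)) \<and> (\<forall>x. lin_functional s (B x))"

lemma vector_space_complex_mult: "vector_space ((*) :: complex \<Rightarrow> complex \<Rightarrow> complex)"
  by unfold_locales (auto simp: algebra_simps)

lemma cfun_lin_iff_lin_functional: "vector_space s \<Longrightarrow> cfun_lin s f \<longleftrightarrow> lin_functional s f"
  unfolding cfun_lin_def lin_functional_def Vector_Spaces.linear_iff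
  using vector_space_complex_mult by auto

lemma lin_functional_zero: "lin_functional s f \<Longrightarrow> f 0 = 0"
  unfolding lin_functional_def by (metis add_cancel_right_right add_0)

lemma lin_functional_sum:
  "lin_functional s f \<Longrightarrow> f (\<Sum>e\<in>E. s (a e) (g e)) = (\<Sum>e\<in>E. a e * f (g e))"
  by (induct E rule: infinite_finite_induct) (auto simp: lin_functional_zero lin_functional_def)

lemma lin_functional_sum_list: "lin_functional s f \<Longrightarrow> f (\<Sum>p\<leftarrow>l. g p) = (\<Sum>p\<leftarrow>l. f (g p))"
  by (induct l) (auto simp: lin_functional_zero lin_functional_def)

lemma lin_functional_add:
  "lin_functional s f \<Longrightarrow> lin_functional s g \<Longrightarrow> lin_functional s (\<lambda>x. f x + g x)"
  unfolding lin_functional_def by (simp add: algebra_simps)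

lemma lin_functional_cmult: "lin_functional s f \<Longrightarrow> lin_functional s (\<lambda>x. c * f x)"
  unfolding lin_functional_def by (simp add: algebra_simps)

lemma lin_functional_multc: "lin_functional s f \<Longrightarrow> lin_functional s (\<lambda>x. f x * c)"
  unfolding lin_functional_def by (simp add: algebra_simps)

lemma lin_functional_sum_list_pointwise:
  assumes "\<And>u v. (u, v) \<in> set l \<Longrightarrow> lin_functional s (F u v)"
  shows "lin_functional s (\<lambda>x. \<Sum>(u,v)\<leftarrow>l. F u v x)"
  using assms
proof (induct l)
  case Nil
  then show ?case by (simp add: lin_functional_def)
next
  case (Cons a l)
  then show ?case by (cases a) (auto intro!: lin_functional_add)
qed

lemma bilinear_formI:
  "(\<And>y. lin_functional s (\<lambda>x. B x y)) \<Longrightarrow> (\<And>x. lin_functional s (B x)) \<Longrightarrow> bilinear_form s B"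
  unfolding bilinear_form_def by auto

lemma bilinear_form_left: "bilinear_form s B \<Longrightarrow> lin_functional s (\<lambda>x. B x y)"
  unfolding bilinear_form_def by auto

lemma bilinear_form_right: "bilinear_form s B \<Longrightarrow> lin_functional s (B x)"
  unfolding bilinear_form_def by auto

lemma sum_list_sum_commute: "(\<Sum>p\<leftarrow>t. \<Sum>e\<in>E. g p e) = (\<Sum>e\<in>E. \<Sum>p\<leftarrow>t. g p e)"
  by (induct t) (simp_all add: sum.distrib)

lemma sum_list_commute:
  fixes F :: "'x \<Rightarrow> 'y \<Rightarrow> 'z \<Rightarrow> 'w \<Rightarrow> 'c::comm_monoid_add"
  shows "(\<Sum>(a,b)\<leftarrow>l. \<Sum>(c,d)\<leftarrow>m. F a b c d) = (\<Sum>(c,d)\<leftarrow>m. \<Sum>(a,b)\<leftarrow>l. F a b c d)"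
  by (induct l) (simp_all add: split_def sum_list_addf)

lemma sum_list_map_concat: "sum_list (map f (concat xss)) = (\<Sum>xs\<leftarrow>xss. sum_list (map f xs))"
  by (induct xss) simp_all

lemma finite_coordinates:
  assumes vs: "vector_space s" and fin: "finite X"
  obtains E c where "finite E" "\<forall>e\<in>E. lin_functional s (c e)"
    "\<forall>x\<in>X. x = (\<Sum>e\<in>E. s (c e x) e)"
proof -
  interpret vs: vector_space s by (rule vs)
  interpret vp: vector_space_pair s "(*) :: complex \<Rightarrow> complex \<Rightarrow> complex"
    by (simp add: vector_space_pair_def vs vector_space_complex_mult)
  obtain B where B: "B \<subseteq> vs.span X" "vs.independent B" "vs.span X \<subseteq> vs.span B"
    using vs.basis_exists[of "vs.span X"] by metis
  have finB: "finite B"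
    using vs.independent_span_bound[OF fin B(2)] B(1) by auto
  define c where "c e = vp.construct B (\<lambda>b. if b = e then 1 else 0)" for e
  have lin_c: "lin_functional s (c e)" for e
    using vp.linear_construct[OF B(2)] unfolding c_def Vector_Spaces.linear_iff lin_functional_def
    by auto
  have c_basis: "c e b = (if b = e then 1 else 0)" if "b \<in> B" for e b
    unfolding c_def using vp.construct_basis[OF B(2) that] by simp
  have "x = (\<Sum>e\<in>B. s (c e x) e)" if "x \<in> X" for x
  proof -
    have "x \<in> vs.span B" using that B(3) vs.span_superset by blast
    then obtain u where u: "x = (\<Sum>v\<in>B. s (u v) v)"
      using vs.span_finite[OF finB] by auto
    have "c e x = u e" if "e \<in> B" for e
    proof -
      have "c e x = (\<Sum>v\<in>B. u v * c e v)" using u lin_functional_sum[OF lin_c] by simp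
      also have "\<dots> = (\<Sum>v\<in>B. if v = e then u v else 0)"
        by (rule sum.cong) (auto simp: c_basis)
      also have "\<dots> = u e" using that finB by simp
      finally show ?thesis .
    qed
    then show ?thesis using u by (auto intro!: sum.cong)
  qed
  then show ?thesis using that[of B c] finB lin_c by blast
qed

lemma lin_functionals_separate:
  assumes "vector_space s" and separate: "\<And>f. lin_functional s f \<Longrightarrow> f a = f b"
  shows "a = b"
proof -
  obtain E c where "finite E" and E: "\<forall>e\<in>E. lin_functional s (c e)"
    "\<forall>x\<in>{a,b}. x = (\<Sum>e\<in>E. s (c e x) e)"
    using finite_coordinates[OF assms(1), of "{a,b}"] by blast
  have coordinates_eq: "c e a = c e b" if "e \<in> E" for e
    using E(1) that separate by blast
  have "a = (\<Sum>e\<in>E. s (c e a) e)" using E(2) by blast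
  also have "\<dots> = (\<Sum>e\<in>E. s (c e b) e)" using coordinates_eq by simp
  also have "\<dots> = b" using E(2) by (metis insertCI)
  finally show ?thesis .
qed

lemma teq2_sum_bilinear:
  assumes vX: "vector_space sX" and vY: "vector_space sY" and t: "teq2 sX sY t u"
    and lin1: "\<And>y. lin_functional sX (\<lambda>x. B x y)" and lin2: "\<And>x. lin_functional sY (B x)"
  shows "(\<Sum>(x,y)\<leftarrow>t. B x y) = (\<Sum>(x,y)\<leftarrow>u. B x y)"
proof -
  obtain E c where "finite E" and E: "\<forall>e\<in>E. lin_functional sX (c e)"
    "\<forall>x\<in>fst ` set (t @ u). x = (\<Sum>e\<in>E. sX (c e x) e)"
    using finite_coordinates[OF vX, of "fst ` set (t @ u)"] by blast
  have expand: "B x y = (\<Sum>e\<in>E. c e x * B e y)" if "x \<in> fst ` set (t @ u)" for x y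
  proof -
    have "B x y = B (\<Sum>e\<in>E. sX (c e x) e) y" using E(2) that by metis
    also have "\<dots> = (\<Sum>e\<in>E. c e x * B e y)" using lin_functional_sum[OF lin1] .
    finally show ?thesis .
  qed
  have coordinatewise: "(\<Sum>(x,y)\<leftarrow>t. c e x * B e y) = (\<Sum>(x,y)\<leftarrow>u. c e x * B e y)"
    if "e \<in> E" for e
    using t E(1) that lin2 unfolding teq2_def by (simp add: cfun_lin_iff_lin_functional vX vY)
  have "(\<Sum>(x,y)\<leftarrow>t. B x y) = (\<Sum>(x,y)\<leftarrow>t. \<Sum>e\<in>E. c e x * B e y)"
    by (rule arg_cong[where f=sum_list], rule map_cong) (simp, clarsimp, rule expand, force)
  also have "\<dots> = (\<Sum>e\<in>E. \<Sum>(x,y)\<leftarrow>t. c e x * B e y)"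
    by (simp add: split_def sum_list_sum_commute)
  also have "\<dots> = (\<Sum>e\<in>E. \<Sum>(x,y)\<leftarrow>u. c e x * B e y)" using coordinatewise by simp
  also have "\<dots> = (\<Sum>(x,y)\<leftarrow>u. \<Sum>e\<in>E. c e x * B e y)"
    by (simp add: split_def sum_list_sum_commute)
  also have "\<dots> = (\<Sum>(x,y)\<leftarrow>u. B x y)"
    by (rule arg_cong[where f=sum_list], rule map_cong) (simp, clarsimp, rule expand[symmetric], force)
  finally show ?thesis .
qed

lemma teq3_sum_trilinear:
  assumes vX: "vector_space sX" and vY: "vector_space sY" and vZ: "vector_space sZ"
    and t: "teq3 sX sY sZ t u"
    and lin1: "\<And>y z. lin_functional sX (\<lambda>x. T x y z)"
    and lin2: "\<And>x z. lin_functional sY (\<lambda>y. T x y z)"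
    and lin3: "\<And>x y. lin_functional sZ (T x y)"
  shows "(\<Sum>(x,y,z)\<leftarrow>t. T x y z) = (\<Sum>(x,y,z)\<leftarrow>u. T x y z)"
proof -
  obtain E c where "finite E" and E: "\<forall>e\<in>E. lin_functional sX (c e)"
    "\<forall>x\<in>fst ` set (t @ u). x = (\<Sum>e\<in>E. sX (c e x) e)"
    using finite_coordinates[OF vX, of "fst ` set (t @ u)"] by blast
  obtain D d where "finite D" and D: "\<forall>k\<in>D. lin_functional sY (d k)"
    "\<forall>y\<in>(fst \<circ> snd) ` set (t @ u). y = (\<Sum>k\<in>D. sY (d k y) k)"
    using finite_coordinates[OF vY, of "(fst \<circ> snd) ` set (t @ u)"] by blast
  have expand: "T x y z = (\<Sum>e\<in>E. \<Sum>k\<in>D. c e x * d k y * T e k z)"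
    if "(x, y, z) \<in> set (t @ u)" for x y z
  proof -
    have x: "x \<in> fst ` set (t @ u)" and y: "y \<in> (fst \<circ> snd) ` set (t @ u)"
      using that by force+
    have "T x y z = T (\<Sum>e\<in>E. sX (c e x) e) y z" using E(2) x by metis
    also have "\<dots> = (\<Sum>e\<in>E. c e x * T e y z)" using lin_functional_sum[OF lin1] .
    also have "\<dots> = (\<Sum>e\<in>E. c e x * T e (\<Sum>k\<in>D. sY (d k y) k) z)" using D(2) y by metis
    also have "\<dots> = (\<Sum>e\<in>E. c e x * (\<Sum>k\<in>D. d k y * T e k z))"
      by (simp only: lin_functional_sum[OF lin2])
    also have "\<dots> = (\<Sum>e\<in>E. \<Sum>k\<in>D. c e x * d k y * T e k z)"
      by (simp add: sum_distrib_left mult.assoc)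
    finally show ?thesis .
  qed
  have coordinatewise:
    "(\<Sum>(x,y,z)\<leftarrow>t. c e x * d k y * T e k z) = (\<Sum>(x,y,z)\<leftarrow>u. c e x * d k y * T e k z)"
    if "e \<in> E" "k \<in> D" for e k
    using t E(1) D(1) that lin3 unfolding teq3_def
    by (simp add: cfun_lin_iff_lin_functional vX vY vZ)
  have "(\<Sum>(x,y,z)\<leftarrow>t. T x y z) = (\<Sum>(x,y,z)\<leftarrow>t. \<Sum>e\<in>E. \<Sum>k\<in>D. c e x * d k y * T e k z)"
    by (rule arg_cong[where f=sum_list], rule map_cong) (simp, clarsimp, rule expand, force)
  also have "\<dots> = (\<Sum>e\<in>E. \<Sum>k\<in>D. \<Sum>(x,y,z)\<leftarrow>t. c e x * d k y * T e k z)"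
    by (simp only: split_def sum_list_sum_commute)
  also have "\<dots> = (\<Sum>e\<in>E. \<Sum>k\<in>D. \<Sum>(x,y,z)\<leftarrow>u. c e x * d k y * T e k z)"
    using coordinatewise by simp
  also have "\<dots> = (\<Sum>(x,y,z)\<leftarrow>u. \<Sum>e\<in>E. \<Sum>k\<in>D. c e x * d k y * T e k z)"
    by (simp only: split_def sum_list_sum_commute)
  also have "\<dots> = (\<Sum>(x,y,z)\<leftarrow>u. T x y z)"
    by (rule arg_cong[where f=sum_list], rule map_cong) (simp, clarsimp, rule expand[symmetric], force)
  finally show ?thesis .
qed

lemma teq2_swap: "teq2 sY sX (map prod.swap t) (map prod.swap u) \<longleftrightarrow> teq2 sX sY t u"
proof -
  have commute: "(\<Sum>p\<leftarrow>l. f (snd p) * g (fst p)) = (\<Sum>p\<leftarrow>l. g (fst p) * f (snd p) :: complex)"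
    for l f g by (simp add: mult.commute)
  show ?thesis unfolding teq2_def by (simp add: comp_def split_def commute) blast
qed

locale hopf =
  fixes sA :: "complex \<Rightarrow> 'a::ring_1 \<Rightarrow> 'a" and \<Delta> :: "'a \<Rightarrow> ('a \<times> 'a) list"
    and \<epsilon> :: "'a \<Rightarrow> complex" and S :: "'a \<Rightarrow> 'a"
  assumes hopf_algebra: "hopf_algebra sA \<Delta> \<epsilon> S"
begin

lemma vector_space_A: "vector_space sA"
  using hopf_algebra unfolding hopf_algebra_def complex_algebra_def by blast

lemma scale_mult_left: "sA c (x * y) = sA c x * y"
  using hopf_algebra unfolding hopf_algebra_def complex_algebra_def by blast

lemma scale_mult_right: "sA c (x * y) = x * sA c y"
  using hopf_algebra unfolding hopf_algebra_def complex_algebra_def by blast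

lemma counit_lin_functional: "lin_functional sA \<epsilon>"
  using hopf_algebra unfolding hopf_algebra_def Vector_Spaces.linear_iff lin_functional_def by auto

lemma counit_left: "(\<Sum>(a1,a2)\<leftarrow>\<Delta> a. sA (\<epsilon> a1) a2) = a"
  using hopf_algebra unfolding hopf_algebra_def by auto

lemma counit_right: "(\<Sum>(a1,a2)\<leftarrow>\<Delta> a. sA (\<epsilon> a2) a1) = a"
  using hopf_algebra unfolding hopf_algebra_def by auto

lemma counit_mult: "\<epsilon> (x * y) = \<epsilon> x * \<epsilon> y"
  using hopf_algebra unfolding hopf_algebra_def by auto

lemma counit_one: "\<epsilon> 1 = 1"
  using hopf_algebra unfolding hopf_algebra_def by auto

lemma antipode_add: "S (x + y) = S x + S y"
  using hopf_algebra unfolding hopf_algebra_def Vector_Spaces.linear_iff by auto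

lemma antipode_scale: "S (sA c x) = sA c (S x)"
  using hopf_algebra unfolding hopf_algebra_def Vector_Spaces.linear_iff by auto

lemma antipode_left: "(\<Sum>(a1,a2)\<leftarrow>\<Delta> a. S a1 * a2) = sA (\<epsilon> a) 1"
  using hopf_algebra unfolding hopf_algebra_def by auto

lemma antipode_right: "(\<Sum>(a1,a2)\<leftarrow>\<Delta> a. a1 * S a2) = sA (\<epsilon> a) 1"
  using hopf_algebra unfolding hopf_algebra_def by auto

lemma teq2_sum_bilinear_form:
  "teq2 sA sA t u \<Longrightarrow> bilinear_form sA G \<Longrightarrow> (\<Sum>(x,y)\<leftarrow>t. G x y) = (\<Sum>(x,y)\<leftarrow>u. G x y)"
  by (rule teq2_sum_bilinear[OF vector_space_A vector_space_A]) (auto simp: bilinear_form_def)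

lemma sweedler_add:
  assumes "bilinear_form sA G"
  shows "(\<Sum>(p,q)\<leftarrow>\<Delta> (x + y). G p q) = (\<Sum>(p,q)\<leftarrow>\<Delta> x. G p q) + (\<Sum>(p,q)\<leftarrow>\<Delta> y. G p q)"
proof -
  have "teq2 sA sA (\<Delta> (x + y)) (\<Delta> x @ \<Delta> y)"
    using hopf_algebra unfolding hopf_algebra_def by auto
  from teq2_sum_bilinear_form[OF this assms] show ?thesis by simp
qed

lemma sweedler_scale:
  assumes G: "bilinear_form sA G"
  shows "(\<Sum>(p,q)\<leftarrow>\<Delta> (sA c x). G p q) = c * (\<Sum>(p,q)\<leftarrow>\<Delta> x. G p q)"
proof -
  have "teq2 sA sA (\<Delta> (sA c x)) (map (\<lambda>(u,v). (sA c u, v)) (\<Delta> x))"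
    using hopf_algebra unfolding hopf_algebra_def by auto
  then have "(\<Sum>(p,q)\<leftarrow>\<Delta> (sA c x). G p q) = (\<Sum>(p,q)\<leftarrow>map (\<lambda>(u,v). (sA c u, v)) (\<Delta> x). G p q)"
    using G by (rule teq2_sum_bilinear_form)
  also have "\<dots> = (\<Sum>(p,q)\<leftarrow>\<Delta> x. c * G p q)"
    using bilinear_form_left[OF G] unfolding lin_functional_def by (simp add: split_def comp_def)
  finally show ?thesis by (simp add: split_def sum_list_const_mult)
qed

lemma lin_functional_sweedler: "bilinear_form sA G \<Longrightarrow> lin_functional sA (\<lambda>z. \<Sum>(p,q)\<leftarrow>\<Delta> z. G p q)"
  unfolding lin_functional_def using sweedler_add sweedler_scale by blast

lemma sweedler_mult:
  assumes "bilinear_form sA G"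
  shows "(\<Sum>(p,q)\<leftarrow>\<Delta> (x * y). G p q)
    = (\<Sum>(x1,x2)\<leftarrow>\<Delta> x. \<Sum>(y1,y2)\<leftarrow>\<Delta> y. G (x1 * y1) (x2 * y2))"
proof -
  have "teq2 sA sA (\<Delta> (x * y))
      (concat (map (\<lambda>(x1,x2). map (\<lambda>(y1,y2). (x1 * y1, x2 * y2)) (\<Delta> y)) (\<Delta> x)))"
    using hopf_algebra unfolding hopf_algebra_def by auto
  from teq2_sum_bilinear_form[OF this assms] show ?thesis
    by (simp add: sum_list_map_concat comp_def split_def)
qed

lemma sweedler_one:
  assumes "bilinear_form sA G"
  shows "(\<Sum>(p,q)\<leftarrow>\<Delta> 1. G p q) = G 1 1"
proof -
  have "teq2 sA sA (\<Delta> 1) [(1, 1)]"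
    using hopf_algebra unfolding hopf_algebra_def by auto
  from teq2_sum_bilinear_form[OF this assms] show ?thesis by simp
qed

lemma sweedler_coassoc:
  assumes "\<And>y z. lin_functional sA (\<lambda>x. T x y z)" and "\<And>x z. lin_functional sA (\<lambda>y. T x y z)"
    and "\<And>x y. lin_functional sA (T x y)"
  shows "(\<Sum>(x,y)\<leftarrow>\<Delta> a. \<Sum>(u,v)\<leftarrow>\<Delta> x. T u v y) = (\<Sum>(x,y)\<leftarrow>\<Delta> a. \<Sum>(u,v)\<leftarrow>\<Delta> y. T x u v)"
proof -
  have "teq3 sA sA sA
      (concat (map (\<lambda>(a1,a2). map (\<lambda>(b,c). (b,c,a2)) (\<Delta> a1)) (\<Delta> a)))
      (concat (map (\<lambda>(a1,a2). map (\<lambda>(b,c). (a1,b,c)) (\<Delta> a2)) (\<Delta> a)))"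
    using hopf_algebra unfolding hopf_algebra_def by auto
  from teq3_sum_trilinear[OF vector_space_A vector_space_A vector_space_A this assms]
  show ?thesis by (simp add: sum_list_map_concat comp_def split_def)
qed

lemma counit_left_functional:
  assumes f: "lin_functional sA f"
  shows "(\<Sum>(a1,a2)\<leftarrow>\<Delta> a. \<epsilon> a1 * f a2) = f a"
proof -
  have "f a = f (\<Sum>(a1,a2)\<leftarrow>\<Delta> a. sA (\<epsilon> a1) a2)" by (simp only: counit_left)
  also have "\<dots> = (\<Sum>(a1,a2)\<leftarrow>\<Delta> a. \<epsilon> a1 * f a2)"
    by (simp add: lin_functional_sum_list[OF f] split_def) (simp add: f[unfolded lin_functional_def])
  finally show ?thesis by simp
qed

lemma counit_right_functional:
  assumes f: "lin_functional sA f"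
  shows "(\<Sum>(a1,a2)\<leftarrow>\<Delta> a. \<epsilon> a2 * f a1) = f a"
proof -
  have "f a = f (\<Sum>(a1,a2)\<leftarrow>\<Delta> a. sA (\<epsilon> a2) a1)" by (simp only: counit_right)
  also have "\<dots> = (\<Sum>(a1,a2)\<leftarrow>\<Delta> a. \<epsilon> a2 * f a1)"
    by (simp add: lin_functional_sum_list[OF f] split_def) (simp add: f[unfolded lin_functional_def])
  finally show ?thesis by simp
qed

definition lin_endo :: "('a \<Rightarrow> 'a) \<Rightarrow> bool" where
  "lin_endo g \<longleftrightarrow> (\<forall>x y. g (x + y) = g x + g y) \<and> (\<forall>c x. g (sA c x) = sA c (g x))"

lemma lin_endo_id: "lin_endo (\<lambda>x. x)"
  unfolding lin_endo_def by simp

lemma lin_endo_antipode: "lin_endo S"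
  unfolding lin_endo_def by (simp add: antipode_add antipode_scale)

lemma lin_endo_antipode_comp: "lin_endo g \<Longrightarrow> lin_endo (\<lambda>x. S (g x))"
  unfolding lin_endo_def by (simp add: antipode_add antipode_scale)

lemma lin_endo_mult_right: "lin_endo g \<Longrightarrow> lin_endo (\<lambda>x. g x * k)"
  unfolding lin_endo_def by (simp add: algebra_simps scale_mult_left)

lemma lin_endo_mult_left: "lin_endo g \<Longrightarrow> lin_endo (\<lambda>x. k * g x)"
  unfolding lin_endo_def by (simp add: algebra_simps scale_mult_right)

lemmas lin_endo_intros =
  lin_endo_id lin_endo_antipode lin_endo_antipode_comp lin_endo_mult_right lin_endo_mult_left

lemma lin_functional_comp: "lin_functional sA f \<Longrightarrow> lin_endo g \<Longrightarrow> lin_functional sA (\<lambda>x. f (g x))"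
  unfolding lin_functional_def lin_endo_def by simp

lemma bilinear_form_comp_left:
  "bilinear_form sA B \<Longrightarrow> lin_endo g \<Longrightarrow> lin_functional sA (\<lambda>x. B (g x) m)"
  by (rule lin_functional_comp[OF bilinear_form_left])

lemma bilinear_form_comp_right:
  "bilinear_form sA B \<Longrightarrow> lin_endo g \<Longrightarrow> lin_functional sA (\<lambda>x. B m (g x))"
  by (rule lin_functional_comp[OF bilinear_form_right])

lemma antipode_contract_right:
  assumes B: "bilinear_form sA B"
  shows "(\<Sum>(x,y)\<leftarrow>\<Delta> a. \<Sum>(u,v)\<leftarrow>\<Delta> x. B u (S v * y)) = B a 1"
proof -
  have contract: "(\<Sum>(u,v)\<leftarrow>\<Delta> y. B x (S u * v)) = \<epsilon> y * B x 1" for x y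
  proof -
    have "(\<Sum>(u,v)\<leftarrow>\<Delta> y. B x (S u * v)) = B x (\<Sum>(u,v)\<leftarrow>\<Delta> y. S u * v)"
      by (simp add: lin_functional_sum_list[OF bilinear_form_right[OF B]] split_def)
    also have "\<dots> = \<epsilon> y * B x 1"
      using bilinear_form_right[OF B] unfolding lin_functional_def by (simp add: antipode_left)
    finally show ?thesis .
  qed
  have "(\<Sum>(x,y)\<leftarrow>\<Delta> a. \<Sum>(u,v)\<leftarrow>\<Delta> x. B u (S v * y))
      = (\<Sum>(x,y)\<leftarrow>\<Delta> a. \<Sum>(u,v)\<leftarrow>\<Delta> y. B x (S u * v))"
    by (rule sweedler_coassoc[where T="\<lambda>x y z. B x (S y * z)"])
      (auto intro!: bilinear_form_comp_left[OF B] bilinear_form_comp_right[OF B] lin_endo_intros)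
  also have "\<dots> = (\<Sum>(x,y)\<leftarrow>\<Delta> a. \<epsilon> y * B x 1)"
    by (simp only: contract)
  also have "\<dots> = B a 1"
    by (rule counit_right_functional[OF bilinear_form_left[OF B]])
  finally show ?thesis .
qed

lemma antipode_contract_left:
  assumes B: "bilinear_form sA B"
  shows "(\<Sum>(x,y)\<leftarrow>\<Delta> a. \<Sum>(u,v)\<leftarrow>\<Delta> y. B (x * S u) v) = B 1 a"
proof -
  have contract: "(\<Sum>(u,v)\<leftarrow>\<Delta> x. B (u * S v) y) = \<epsilon> x * B 1 y" for x y
  proof -
    have "(\<Sum>(u,v)\<leftarrow>\<Delta> x. B (u * S v) y) = B (\<Sum>(u,v)\<leftarrow>\<Delta> x. u * S v) y"
      by (simp add: lin_functional_sum_list[OF bilinear_form_left[OF B]] split_def)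
    also have "\<dots> = \<epsilon> x * B 1 y"
      using bilinear_form_left[OF B] unfolding lin_functional_def by (simp add: antipode_right)
    finally show ?thesis .
  qed
  have "(\<Sum>(x,y)\<leftarrow>\<Delta> a. \<Sum>(u,v)\<leftarrow>\<Delta> y. B (x * S u) v)
      = (\<Sum>(x,y)\<leftarrow>\<Delta> a. \<Sum>(u,v)\<leftarrow>\<Delta> x. B (u * S v) y)"
    by (rule sym, rule sweedler_coassoc[where T="\<lambda>x y z. B (x * S y) z"])
      (auto intro!: bilinear_form_comp_left[OF B] bilinear_form_comp_right[OF B] lin_endo_intros)
  also have "\<dots> = (\<Sum>(x,y)\<leftarrow>\<Delta> a. \<epsilon> x * B 1 y)"
    by (simp only: contract)
  also have "\<dots> = B 1 a"
    by (rule counit_left_functional[OF bilinear_form_right[OF B]])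
  finally show ?thesis .
qed

text \<open>\<open>\<Sum> a\<^sub>1 S(a\<^sub>4) \<otimes> a\<^sub>2 S(a\<^sub>3) = \<epsilon>(a) 1 \<otimes> 1\<close>: the map \<open>a \<mapsto> \<Sum> S a\<^sub>2 \<otimes> S a\<^sub>1\<close>
is a right convolution inverse of \<open>\<Delta>\<close>.\<close>
lemma coproduct_conv_antipode_flip:
  assumes C: "bilinear_form sA C"
  shows "(\<Sum>(y1,y2)\<leftarrow>\<Delta> y. \<Sum>(u,u')\<leftarrow>\<Delta> y1. \<Sum>(w,w')\<leftarrow>\<Delta> y2. C (u * S w') (u' * S w))
    = \<epsilon> y * C 1 1"
proof -
  define T where "T x y z = (\<Sum>(w,w')\<leftarrow>\<Delta> z. C (x * S w') (y * S w))" for x y z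
  have contract: "(\<Sum>(v,v')\<leftarrow>\<Delta> a2. T a1 v v') = C (a1 * S a2) 1" for a1 a2
  proof -
    have "bilinear_form sA (\<lambda>p q. C (a1 * S q) p)"
      by (auto intro!: bilinear_formI bilinear_form_comp_left[OF C] bilinear_form_comp_right[OF C]
          lin_endo_intros)
    from antipode_contract_left[OF this, of a2] show ?thesis
      unfolding T_def by simp
  qed
  have "(\<Sum>(y1,y2)\<leftarrow>\<Delta> y. \<Sum>(u,u')\<leftarrow>\<Delta> y1. \<Sum>(w,w')\<leftarrow>\<Delta> y2. C (u * S w') (u' * S w))
      = (\<Sum>(y1,y2)\<leftarrow>\<Delta> y. \<Sum>(u,u')\<leftarrow>\<Delta> y1. T u u' y2)"
    unfolding T_def ..
  also have "\<dots> = (\<Sum>(a1,a2)\<leftarrow>\<Delta> y. \<Sum>(v,v')\<leftarrow>\<Delta> a2. T a1 v v')"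
    unfolding T_def
    by (rule sweedler_coassoc[where T="\<lambda>x y z. \<Sum>(w,w')\<leftarrow>\<Delta> z. C (x * S w') (y * S w)"])
      (auto intro!: lin_functional_sum_list_pointwise lin_functional_sweedler bilinear_formI
        bilinear_form_comp_left[OF C] bilinear_form_comp_right[OF C] lin_endo_intros)
  also have "\<dots> = (\<Sum>(a1,a2)\<leftarrow>\<Delta> y. C (a1 * S a2) 1)"
    by (simp only: contract)
  also have "\<dots> = C (\<Sum>(a1,a2)\<leftarrow>\<Delta> y. a1 * S a2) 1"
    by (simp add: lin_functional_sum_list[OF bilinear_form_left[OF C]] split_def)
  also have "\<dots> = \<epsilon> y * C 1 1"
    using bilinear_form_left[OF C] unfolding lin_functional_def by (simp add: antipode_right)
  finally show ?thesis .
qed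

text \<open>\<open>\<Sum> \<Delta>(S a\<^sub>1) \<Delta>(a\<^sub>2) = \<epsilon>(a) 1 \<otimes> 1\<close>: \<open>\<Delta> \<circ> S\<close> is a left convolution inverse of \<open>\<Delta>\<close>.\<close>
lemma antipode_conv_coproduct:
  assumes D: "bilinear_form sA D"
  shows "(\<Sum>(x1,x2)\<leftarrow>\<Delta> a. \<Sum>(p,p')\<leftarrow>\<Delta> (S x1). \<Sum>(u,u')\<leftarrow>\<Delta> x2. D (p * u) (p' * u'))
    = \<epsilon> a * D 1 1"
proof -
  have "(\<Sum>(x1,x2)\<leftarrow>\<Delta> a. \<Sum>(p,p')\<leftarrow>\<Delta> (S x1). \<Sum>(u,u')\<leftarrow>\<Delta> x2. D (p * u) (p' * u'))
      = (\<Sum>(x1,x2)\<leftarrow>\<Delta> a. \<Sum>(p,q)\<leftarrow>\<Delta> (S x1 * x2). D p q)"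
    by (simp only: sweedler_mult[OF D])
  also have "\<dots> = (\<Sum>(p,q)\<leftarrow>\<Delta> (\<Sum>(x1,x2)\<leftarrow>\<Delta> a. S x1 * x2). D p q)"
    using lin_functional_sum_list[OF lin_functional_sweedler[OF D], of "\<lambda>(x1,x2). S x1 * x2"]
    by (simp add: split_def)
  also have "\<dots> = \<epsilon> a * D 1 1"
    by (simp add: antipode_left sweedler_scale[OF D] sweedler_one[OF D])
  finally show ?thesis .
qed

text \<open>With \<open>L = \<Delta> \<circ> S\<close> and \<open>R a = \<Sum> S a\<^sub>2 \<otimes> S a\<^sub>1\<close>, associativity of convolution gives
\<open>L = L * (\<Delta> * R) = (L * \<Delta>) * R = R\<close>.\<close>
lemma antipode_anticomultiplicative:
  assumes B: "bilinear_form sA B"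
  shows "(\<Sum>(p,q)\<leftarrow>\<Delta> (S a). B p q) = (\<Sum>(x,y)\<leftarrow>\<Delta> a. B (S y) (S x))"
proof -
  define C where "C x m m' = (\<Sum>(p,p')\<leftarrow>\<Delta> (S x). B (p * m) (p' * m'))" for x m m'
  define D where "D z m m' = (\<Sum>(w,w')\<leftarrow>\<Delta> z. B (m * S w') (m' * S w))" for z m m'
  define H where "H x y z = (\<Sum>(u,u')\<leftarrow>\<Delta> y. \<Sum>(w,w')\<leftarrow>\<Delta> z. C x (u * S w') (u' * S w))"
    for x y z
  define L where "L x = (\<Sum>(p,q)\<leftarrow>\<Delta> (S x). B p q)" for x
  define R where "R x = (\<Sum>(u,v)\<leftarrow>\<Delta> x. B (S v) (S u))" for x
  have C: "bilinear_form sA (C x)" for x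
    unfolding C_def
    by (auto intro!: bilinear_formI lin_functional_sum_list_pointwise
        bilinear_form_comp_left[OF B] bilinear_form_comp_right[OF B] lin_endo_intros)
  have D: "bilinear_form sA (D z)" for z
    unfolding D_def
    by (auto intro!: bilinear_formI lin_functional_sum_list_pointwise
        bilinear_form_comp_left[OF B] bilinear_form_comp_right[OF B] lin_endo_intros)
  have lin_L: "lin_functional sA L"
    unfolding L_def by (rule lin_functional_comp[OF lin_functional_sweedler[OF B] lin_endo_antipode])
  have lin_R: "lin_functional sA R"
    unfolding R_def
    by (auto intro!: lin_functional_sweedler bilinear_formI
        bilinear_form_comp_left[OF B] bilinear_form_comp_right[OF B] lin_endo_intros)
  have lin_C: "lin_functional sA (\<lambda>x. C x m m')" for m m'
    unfolding C_def
    by (rule lin_functional_comp[OF lin_functional_sweedler lin_endo_antipode])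
      (auto intro!: bilinear_formI bilinear_form_comp_left[OF B] bilinear_form_comp_right[OF B]
        lin_endo_intros)
  have LH: "\<epsilon> y * L x = (\<Sum>(y1,y2)\<leftarrow>\<Delta> y. H x y1 y2)" for x y
    using coproduct_conv_antipode_flip[OF C, of x y] unfolding H_def C_def L_def by simp
  have HR: "(\<Sum>(x1,x2)\<leftarrow>\<Delta> y. H x1 x2 z) = \<epsilon> y * R z" for y z
  proof -
    have swap_inner: "(\<Sum>(w,w')\<leftarrow>\<Delta> z. C x1 (u * S w') (u' * S w))
        = (\<Sum>(p,p')\<leftarrow>\<Delta> (S x1). D z (p * u) (p' * u'))" for x1 u u'
      unfolding C_def D_def by (subst sum_list_commute) (simp add: mult.assoc)
    have "(\<Sum>(x1,x2)\<leftarrow>\<Delta> y. H x1 x2 z)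
        = (\<Sum>(x1,x2)\<leftarrow>\<Delta> y. \<Sum>(u,u')\<leftarrow>\<Delta> x2. \<Sum>(p,p')\<leftarrow>\<Delta> (S x1). D z (p * u) (p' * u'))"
      unfolding H_def swap_inner ..
    also have "\<dots>
        = (\<Sum>(x1,x2)\<leftarrow>\<Delta> y. \<Sum>(p,p')\<leftarrow>\<Delta> (S x1). \<Sum>(u,u')\<leftarrow>\<Delta> x2. D z (p * u) (p' * u'))"
      by (subst sum_list_commute) (rule refl)
    also have "\<dots> = \<epsilon> y * D z 1 1"
      by (rule antipode_conv_coproduct[OF D])
    finally show ?thesis unfolding D_def R_def by simp
  qed
  have "L a = (\<Sum>(a1,a2)\<leftarrow>\<Delta> a. \<epsilon> a2 * L a1)"
    by (rule counit_right_functional[OF lin_L, symmetric])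
  also have "\<dots> = (\<Sum>(a1,a2)\<leftarrow>\<Delta> a. \<Sum>(y1,y2)\<leftarrow>\<Delta> a2. H a1 y1 y2)"
    by (simp only: LH)
  also have "\<dots> = (\<Sum>(a1,a2)\<leftarrow>\<Delta> a. \<Sum>(x1,x2)\<leftarrow>\<Delta> a1. H x1 x2 a2)"
    unfolding H_def
    by (rule sym, rule sweedler_coassoc[where
          T="\<lambda>x y z. \<Sum>(u,u')\<leftarrow>\<Delta> y. \<Sum>(w,w')\<leftarrow>\<Delta> z. C x (u * S w') (u' * S w)"])
      (auto intro!: lin_functional_sum_list_pointwise lin_functional_sweedler bilinear_formI lin_C
        bilinear_form_comp_left[OF C] bilinear_form_comp_right[OF C] lin_endo_intros)
  also have "\<dots> = (\<Sum>(a1,a2)\<leftarrow>\<Delta> a. \<epsilon> a1 * R a2)"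
    by (simp only: HR)
  also have "\<dots> = R a"
    by (rule counit_left_functional[OF lin_R])
  finally show ?thesis unfolding L_def R_def .
qed

lemma counit_antipode: "\<epsilon> (S a) = \<epsilon> a"
proof -
  have "\<epsilon> a = \<epsilon> (sA (\<epsilon> a) 1)"
    using counit_lin_functional counit_one unfolding lin_functional_def by simp
  also have "\<dots> = \<epsilon> (\<Sum>(a1,a2)\<leftarrow>\<Delta> a. a1 * S a2)"
    by (simp add: antipode_right)
  also have "\<dots> = (\<Sum>(a1,a2)\<leftarrow>\<Delta> a. \<epsilon> a1 * \<epsilon> (S a2))"
    by (simp add: lin_functional_sum_list[OF counit_lin_functional] split_def counit_mult)
  also have "\<dots> = \<epsilon> (S a)"
    by (rule counit_left_functional[OF lin_functional_comp[OF counit_lin_functional lin_endo_antipode]])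
  finally show ?thesis by simp
qed

lemma antipode_left_flip:
  assumes SS: "\<forall>x. S (S x) = x"
  shows "(\<Sum>(x,y)\<leftarrow>\<Delta> a. S y * x) = sA (\<epsilon> a) 1"
proof (rule lin_functionals_separate[OF vector_space_A])
  fix h assume h: "lin_functional sA h"
  have B: "bilinear_form sA (\<lambda>p q. h (p * S q))"
    by (auto intro!: bilinear_formI lin_functional_comp[OF h] lin_endo_intros)
  have "h (\<Sum>(x,y)\<leftarrow>\<Delta> a. S y * x) = (\<Sum>(x,y)\<leftarrow>\<Delta> a. h (S y * S (S x)))"
    using SS by (simp add: lin_functional_sum_list[OF h] split_def)
  also have "\<dots> = (\<Sum>(p,q)\<leftarrow>\<Delta> (S a). h (p * S q))"
    by (rule antipode_anticomultiplicative[OF B, symmetric])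
  also have "\<dots> = h (\<Sum>(p,q)\<leftarrow>\<Delta> (S a). p * S q)"
    by (simp add: lin_functional_sum_list[OF h] split_def)
  also have "\<dots> = h (sA (\<epsilon> a) 1)"
    by (simp add: antipode_right counit_antipode)
  finally show "h (\<Sum>(x,y)\<leftarrow>\<Delta> a. S y * x) = h (sA (\<epsilon> a) 1)" .
qed

lemma antipode_right_flip:
  assumes SS: "\<forall>x. S (S x) = x"
  shows "(\<Sum>(x,y)\<leftarrow>\<Delta> a. y * S x) = sA (\<epsilon> a) 1"
proof (rule lin_functionals_separate[OF vector_space_A])
  fix h assume h: "lin_functional sA h"
  have B: "bilinear_form sA (\<lambda>p q. h (S p * q))"
    by (auto intro!: bilinear_formI lin_functional_comp[OF h] lin_endo_intros)
  have "h (\<Sum>(x,y)\<leftarrow>\<Delta> a. y * S x) = (\<Sum>(x,y)\<leftarrow>\<Delta> a. h (S (S y) * S x))"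
    using SS by (simp add: lin_functional_sum_list[OF h] split_def)
  also have "\<dots> = (\<Sum>(p,q)\<leftarrow>\<Delta> (S a). h (S p * q))"
    by (rule antipode_anticomultiplicative[OF B, symmetric])
  also have "\<dots> = h (\<Sum>(p,q)\<leftarrow>\<Delta> (S a). S p * q)"
    by (simp add: lin_functional_sum_list[OF h] split_def)
  also have "\<dots> = h (sA (\<epsilon> a) 1)"
    by (simp add: antipode_left counit_antipode)
  finally show "h (\<Sum>(x,y)\<leftarrow>\<Delta> a. y * S x) = h (sA (\<epsilon> a) 1)" .
qed

lemma hopf_algebra_coopposite:
  assumes SS: "\<forall>x. S (S x) = x"
  shows "hopf_algebra sA (\<lambda>a. map prod.swap (\<Delta> a)) \<epsilon> S"
proof -
  let ?\<Delta>' = "\<lambda>a. map prod.swap (\<Delta> a)"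
  from hopf_algebra have
    algebra: "complex_algebra sA" and
    add: "\<And>x y. teq2 sA sA (\<Delta> (x + y)) (\<Delta> x @ \<Delta> y)" and
    counit_linear: "Vector_Spaces.linear sA (*) \<epsilon>" and
    mult: "\<And>x y. teq2 sA sA (\<Delta> (x * y))
      (concat (map (\<lambda>(x1,x2). map (\<lambda>(y1,y2). (x1 * y1, x2 * y2)) (\<Delta> y)) (\<Delta> x)))" and
    one: "teq2 sA sA (\<Delta> 1) [(1, 1)]" and
    antipode_linear: "Vector_Spaces.linear sA sA S"
    unfolding hopf_algebra_def by auto
  have add': "teq2 sA sA (?\<Delta>' (x + y)) (?\<Delta>' x @ ?\<Delta>' y)" for x y
    using teq2_swap[THEN iffD2, OF add[of x y]] by simp
  have scale': "teq2 sA sA (?\<Delta>' (sA c x)) (map (\<lambda>(u,v). (sA c u, v)) (?\<Delta>' x))" for c x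
  proof -
    have "teq2 sA sA (\<Delta> (sA c x)) (map (\<lambda>(u,v). (u, sA c v)) (\<Delta> x))"
      unfolding teq2_def
    proof (intro allI impI)
      fix f g assume "cfun_lin sA f \<and> cfun_lin sA g"
      then have f: "lin_functional sA f" and g: "lin_functional sA g"
        by (simp_all add: cfun_lin_iff_lin_functional vector_space_A)
      have "bilinear_form sA (\<lambda>p q. f p * g q)"
        by (auto intro!: bilinear_formI lin_functional_cmult lin_functional_multc f g)
      from sweedler_scale[OF this] show "(\<Sum>(x,y)\<leftarrow>\<Delta> (sA c x). f x * g y)
          = (\<Sum>(x,y)\<leftarrow>map (\<lambda>(u,v). (u, sA c v)) (\<Delta> x). f x * g y)"
        using g unfolding lin_functional_def
        by (simp add: split_def comp_def sum_list_const_mult mult.left_commute)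
    qed
    from teq2_swap[THEN iffD2, OF this] show ?thesis by (simp add: comp_def split_def)
  qed
  have coassoc': "teq3 sA sA sA
      (concat (map (\<lambda>(a1,a2). map (\<lambda>(b,c). (b,c,a2)) (?\<Delta>' a1)) (?\<Delta>' a)))
      (concat (map (\<lambda>(a1,a2). map (\<lambda>(b,c). (a1,b,c)) (?\<Delta>' a2)) (?\<Delta>' a)))" for a
    unfolding teq3_def
  proof (intro allI impI)
    fix f g h assume "cfun_lin sA f \<and> cfun_lin sA g \<and> cfun_lin sA h"
    then have "lin_functional sA f" "lin_functional sA g" "lin_functional sA h"
      by (simp_all add: cfun_lin_iff_lin_functional vector_space_A)
    then have "(\<Sum>(x,y)\<leftarrow>\<Delta> a. \<Sum>(u,v)\<leftarrow>\<Delta> x. f y * g v * h u)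
        = (\<Sum>(x,y)\<leftarrow>\<Delta> a. \<Sum>(u,v)\<leftarrow>\<Delta> y. f v * g u * h x)"
      by (intro sweedler_coassoc[where T="\<lambda>x y z. f z * g y * h x"])
        (auto intro!: lin_functional_cmult lin_functional_multc)
    then show "(\<Sum>(x,y,z)\<leftarrow>concat (map (\<lambda>(a1,a2). map (\<lambda>(b,c). (b,c,a2)) (?\<Delta>' a1)) (?\<Delta>' a)).
          f x * g y * h z)
        = (\<Sum>(x,y,z)\<leftarrow>concat (map (\<lambda>(a1,a2). map (\<lambda>(b,c). (a1,b,c)) (?\<Delta>' a2)) (?\<Delta>' a)).
          f x * g y * h z)"
      by (simp add: sum_list_map_concat comp_def split_def)
  qed
  have mult': "teq2 sA sA (?\<Delta>' (x * y))
      (concat (map (\<lambda>(x1,x2). map (\<lambda>(y1,y2). (x1 * y1, x2 * y2)) (?\<Delta>' y)) (?\<Delta>' x)))" for x y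
    using teq2_swap[THEN iffD2, OF mult[of x y]] by (simp add: map_concat comp_def split_def)
  have one': "teq2 sA sA (?\<Delta>' 1) [(1, 1)]"
    using teq2_swap[THEN iffD2, OF one] by simp
  have counit_left': "(\<Sum>(a1,a2)\<leftarrow>?\<Delta>' a. sA (\<epsilon> a1) a2) = a"
    and counit_right': "(\<Sum>(a1,a2)\<leftarrow>?\<Delta>' a. sA (\<epsilon> a2) a1) = a" for a
    using counit_left[of a] counit_right[of a] by (simp_all add: comp_def split_def)
  have antipode_left': "(\<Sum>(a1,a2)\<leftarrow>?\<Delta>' a. S a1 * a2) = sA (\<epsilon> a) 1"
    and antipode_right': "(\<Sum>(a1,a2)\<leftarrow>?\<Delta>' a. a1 * S a2) = sA (\<epsilon> a) 1" for a
    using antipode_left_flip[OF SS, of a] antipode_right_flip[OF SS, of a]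
    by (simp_all add: comp_def split_def)
  show ?thesis
    unfolding hopf_algebra_def
    using algebra add' scale' coassoc' counit_linear counit_left' counit_right' mult' one'
      counit_mult counit_one antipode_linear antipode_left' antipode_right'
    by blast
qed

end

locale hopf_representation = hopf sA \<Delta> \<epsilon> S
  for sA :: "complex \<Rightarrow> 'a::ring_1 \<Rightarrow> 'a" and \<Delta> \<epsilon> S +
  fixes sV :: "complex \<Rightarrow> 'v::ab_group_add \<Rightarrow> 'v" and \<rho> :: "'a \<Rightarrow> 'v \<Rightarrow> 'v"
  assumes representation: "representation sA sV \<rho>"
begin

lemma vector_space_V: "vector_space sV"
  using representation unfolding representation_def by auto

lemma rho_mult: "\<rho> (x * y) v = \<rho> x (\<rho> y v)"
  using representation unfolding representation_def by auto

lemma rho_one: "\<rho> 1 v = v"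
  using representation unfolding representation_def by auto

lemma lin_functional_rho_vector: "lin_functional sV g \<Longrightarrow> lin_functional sV (\<lambda>w. g (\<rho> k w))"
  using representation unfolding representation_def lin_functional_def Vector_Spaces.linear_iff
  by auto

lemma lin_functional_rho_algebra:
  "lin_functional sV g \<Longrightarrow> lin_endo h \<Longrightarrow> lin_functional sA (\<lambda>q. g (\<rho> (h q) w))"
  using representation unfolding representation_def lin_functional_def lin_endo_def by simp

lemma antipode_mem_T_l:
  assumes "a \<in> T_r sA sV \<Delta> \<rho> \<phi>"
  shows "S a \<in> T_l sA sV \<Delta> \<rho> \<phi>"
proof -
  have a: "teq2 sA sV (map (\<lambda>(a1,a2). (a1, \<rho> a2 \<phi>)) (\<Delta> a)) [(a, \<phi>)]"
    using assms unfolding T_r_def by simp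
  have pairing: "(\<Sum>(p,q)\<leftarrow>\<Delta> (S a). g (\<rho> p \<phi>) * f q) = g \<phi> * f (S a)"
    if f: "lin_functional sA f" and g: "lin_functional sV g" for f g
  proof -
    define \<beta> where "\<beta> x w = (\<Sum>(u,v)\<leftarrow>\<Delta> x. g (\<rho> (S v) w) * f (S u))" for x w
    have B: "bilinear_form sA (\<lambda>p q. g (\<rho> p \<phi>) * f q)"
      by (auto intro!: bilinear_formI lin_functional_cmult[OF f] lin_functional_multc
          lin_functional_rho_algebra[OF g] lin_endo_intros)
    have C: "bilinear_form sA (\<lambda>p q. g (\<rho> q \<phi>) * f (S p))"
      by (auto intro!: bilinear_formI lin_functional_cmult lin_functional_multc
          lin_functional_comp[OF f] lin_functional_rho_algebra[OF g] lin_endo_intros)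
    have \<beta>_left: "lin_functional sA (\<lambda>x. \<beta> x w)" for w
      unfolding \<beta>_def
      by (auto intro!: lin_functional_sweedler bilinear_formI lin_functional_cmult lin_functional_multc
          lin_functional_comp[OF f] lin_functional_rho_algebra[OF g] lin_endo_intros)
    have \<beta>_right: "lin_functional sV (\<beta> x)" for x
      unfolding \<beta>_def
      by (auto intro!: lin_functional_sum_list_pointwise lin_functional_multc
          lin_functional_rho_vector[OF g])
    have "(\<Sum>(p,q)\<leftarrow>\<Delta> (S a). g (\<rho> p \<phi>) * f q) = \<beta> a \<phi>"
      unfolding \<beta>_def by (rule antipode_anticomultiplicative[OF B])
    also have "\<dots> = (\<Sum>(x,w)\<leftarrow>map (\<lambda>(a1,a2). (a1, \<rho> a2 \<phi>)) (\<Delta> a). \<beta> x w)"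
      using teq2_sum_bilinear[OF vector_space_A vector_space_V a, of \<beta>, OF \<beta>_left \<beta>_right] by simp
    also have "\<dots> = (\<Sum>(x,y)\<leftarrow>\<Delta> a. \<Sum>(u,v)\<leftarrow>\<Delta> x. g (\<rho> (S v * y) \<phi>) * f (S u))"
      by (simp add: \<beta>_def rho_mult split_def comp_def)
    also have "\<dots> = g (\<rho> 1 \<phi>) * f (S a)"
      using antipode_contract_right[OF C] by simp
    finally show ?thesis by (simp add: rho_one)
  qed
  show ?thesis
    unfolding T_l_def teq2_def
    by (auto simp: cfun_lin_iff_lin_functional vector_space_A vector_space_V split_def comp_def
        pairing[unfolded split_def])
qed

end

lemma T_r_coopposite: "T_r sA sV (\<lambda>a. map prod.swap (\<Delta> a)) \<rho> \<phi> = T_l sA sV \<Delta> \<rho> \<phi>"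
proof -
  have "teq2 sA sV (map (\<lambda>(a1,a2). (a1, \<rho> a2 \<phi>)) (map prod.swap (\<Delta> a))) [(a, \<phi>)]
      \<longleftrightarrow> teq2 sV sA (map (\<lambda>(a1,a2). (\<rho> a1 \<phi>, a2)) (\<Delta> a)) [(\<phi>, a)]" for a
    using teq2_swap[of sA sV "map (\<lambda>(a1,a2). (\<rho> a1 \<phi>, a2)) (\<Delta> a)" "[(\<phi>, a)]"]
    by (simp add: comp_def split_def)
  then show ?thesis unfolding T_r_def T_l_def by blast
qed

lemma T_l_coopposite: "T_l sA sV (\<lambda>a. map prod.swap (\<Delta> a)) \<rho> \<phi> = T_r sA sV \<Delta> \<rho> \<phi>"
proof -
  have "teq2 sV sA (map (\<lambda>(a1,a2). (\<rho> a1 \<phi>, a2)) (map prod.swap (\<Delta> a))) [(\<phi>, a)]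
      \<longleftrightarrow> teq2 sA sV (map (\<lambda>(a1,a2). (a1, \<rho> a2 \<phi>)) (\<Delta> a)) [(a, \<phi>)]" for a
    using teq2_swap[of sV sA "map (\<lambda>(a1,a2). (a1, \<rho> a2 \<phi>)) (\<Delta> a)" "[(a, \<phi>)]"]
    by (simp add: comp_def split_def)
  then show ?thesis unfolding T_r_def T_l_def by blast
qed

lemma involution_image_eq:
  assumes "\<forall>x. f (f x) = x" and "f ` A \<subseteq> B" and "f ` B \<subseteq> A"
  shows "f ` A = B"
proof
  show "B \<subseteq> f ` A"
  proof
    fix b assume "b \<in> B"
    then have "f b \<in> A" using assms(3) by blast
    then show "b \<in> f ` A" using assms(1) by (metis image_eqI)
  qed
qed (fact assms(2))

theorem lemma4:
  fixes sA :: "complex \<Rightarrow> 'a::ring_1 \<Rightarrow> 'a"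
    and \<Delta> :: "'a \<Rightarrow> ('a \<times> 'a) list"
    and \<epsilon> :: "'a \<Rightarrow> complex"
    and S :: "'a \<Rightarrow> 'a"
    and sV :: "complex \<Rightarrow> 'v::ab_group_add \<Rightarrow> 'v"
    and \<rho> :: "'a \<Rightarrow> 'v \<Rightarrow> 'v"
    and \<phi> :: 'v
  assumes "hopf_algebra sA \<Delta> \<epsilon> S"
    and "\<forall>a. S (S a) = a"
    and "representation sA sV \<rho>"
  shows "S ` T_l sA sV \<Delta> \<rho> \<phi> = T_r sA sV \<Delta> \<rho> \<phi> \<and> S ` T_r sA sV \<Delta> \<rho> \<phi> = T_l sA sV \<Delta> \<rho> \<phi>"
proof -
  interpret hopf_representation sA \<Delta> \<epsilon> S sV \<rho>
    by unfold_locales (fact assms(1), fact assms(3))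
  interpret coopposite: hopf_representation sA "\<lambda>a. map prod.swap (\<Delta> a)" \<epsilon> S sV \<rho>
    by unfold_locales (fact hopf_algebra_coopposite[OF assms(2)], fact assms(3))
  have "S ` T_r sA sV \<Delta> \<rho> \<phi> \<subseteq> T_l sA sV \<Delta> \<rho> \<phi>"
    using antipode_mem_T_l by blast
  moreover have "S ` T_l sA sV \<Delta> \<rho> \<phi> \<subseteq> T_r sA sV \<Delta> \<rho> \<phi>"
    using coopposite.antipode_mem_T_l unfolding T_r_coopposite T_l_coopposite by blast
  ultimately show ?thesis
    using involution_image_eq[OF assms(2)] by blast
qed

end
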